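(* Let $\mathcal W$ be a differentially connected covering equation of the Gibbons–Tsarev equation, with total derivatives $\tilde D_x,\tilde D_y$ (differentially connected: every smooth function $h$ on $\mathcal W$ with $\tilde D_x h=\tilde D_y h=0$ is constant). Let $\psi^{(k)}$, $\varphi^{(k)}$ ($k\ge1$) be smooth functions on $\mathcal W$ and consider the formal series $$\psi(\lambda)=\lambda+\sum_{k\ge1}\psi^{(k)}\lambda^{-k},\qquad \varphi(\lambda)=\frac1\lambda+\sum_{k\ge1}\varphi^{(k)}\lambda^k .$$ Consider the conditions: (1) $\tilde D_x\psi=\dfrac{\psi'}{\lambda^2-z_x\lambda-z_y}$ and $\tilde D_y\psi=\dfrac{(\lambda-z_x)\psi'}{\lambda^2-z_x\lambda-z_y}$ (as series in $\lambda^{-1}$, $\psi'=d\psi/d\lambda$); (2) $\tilde D_x\varphi=-\dfrac1{\varphi^2-z_x\varphi-z_y}$ and $\tilde D_y\varphi=-\dfrac{\varphi-z_x}{\varphi^2-z_x\varphi-z_y}$ (as series in $\lambda$); (3) every coefficient of the Laurent series $\psi(\varphi(\lambda))$ in $\lambda$ is a constant, i.e. $\psi(\varphi(\lambda))=c(\lambda)$ with $c$ independent of the point of $\mathcal W$. Then any two of the conditions (1), (2), (3) imply the remaining one.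
   Context: The Gibbons–Tsarev equation is $z_{yy}+z_xz_{xy}-z_yz_{xx}+1=0$; $z_x,z_y$ are regarded as functions on $\mathcal W$ via the covering projection. $\tilde D_x,\tilde D_y$ act on formal series coefficientwise. The composition $\psi(\varphi(\lambda))=\varphi(\lambda)+\sum_{k\ge1}\psi^{(k)}\varphi(\lambda)^{-k}$ is a well-defined formal Laurent series in $\lambda$ since $1/\varphi(\lambda)$ is a power series in $\lambda$ without constant term; $\psi'(\varphi)$ likewise denotes the composition of $\psi'$ with $\varphi$. *)

theory Defs
  imports "HOL-Computational_Algebra.Formal_Laurent_Series"
begin

text \<open>Abstract model of a covering W of the Gibbons-Tsarev equation
  z_yy + z_x z_xy - z_y z_xx + 1 = 0.
  Points of W are the elements of the type 'w; Fs is the algebra of smooth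
  functions on W; Dx, Dy are the total derivatives (commuting derivations
  of Fs); x, y, z, zx, zy are the pull-backs of the jet coordinates via
  the covering projection.\<close>

definition derivation_on :: "('w \<Rightarrow> real) set \<Rightarrow> (('w \<Rightarrow> real) \<Rightarrow> ('w \<Rightarrow> real)) \<Rightarrow> bool" where
  "derivation_on Fs D \<longleftrightarrow>
     (\<forall>f\<in>Fs. D f \<in> Fs) \<and>
     (\<forall>c. D (\<lambda>_. c) = (\<lambda>_. 0)) \<and>
     (\<forall>f\<in>Fs. \<forall>g\<in>Fs. D (\<lambda>p. f p + g p) = (\<lambda>p. D f p + D g p)) \<and>
     (\<forall>f\<in>Fs. \<forall>g\<in>Fs. D (\<lambda>p. f p * g p) = (\<lambda>p. D f p * g p + f p * D g p))"

definition GT_covering ::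
  "('w \<Rightarrow> real) set \<Rightarrow> (('w \<Rightarrow> real) \<Rightarrow> ('w \<Rightarrow> real)) \<Rightarrow> (('w \<Rightarrow> real) \<Rightarrow> ('w \<Rightarrow> real))
   \<Rightarrow> ('w \<Rightarrow> real) \<Rightarrow> ('w \<Rightarrow> real) \<Rightarrow> ('w \<Rightarrow> real) \<Rightarrow> ('w \<Rightarrow> real) \<Rightarrow> ('w \<Rightarrow> real) \<Rightarrow> bool" where
  "GT_covering Fs Dx Dy x y z zx zy \<longleftrightarrow>
     (\<forall>c. (\<lambda>_. c) \<in> Fs) \<and>
     (\<forall>f\<in>Fs. \<forall>g\<in>Fs. (\<lambda>p. f p + g p) \<in> Fs \<and> (\<lambda>p. f p * g p) \<in> Fs) \<and>
     derivation_on Fs Dx \<and> derivation_on Fs Dy \<and>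
     (\<forall>f\<in>Fs. Dx (Dy f) = Dy (Dx f)) \<and>
     x \<in> Fs \<and> y \<in> Fs \<and> z \<in> Fs \<and> zx \<in> Fs \<and> zy \<in> Fs \<and>
     Dx x = (\<lambda>_. 1) \<and> Dy x = (\<lambda>_. 0) \<and> Dx y = (\<lambda>_. 0) \<and> Dy y = (\<lambda>_. 1) \<and>
     Dx z = zx \<and> Dy z = zy \<and>
     Dy zx = Dx zy \<and>
     (\<forall>p. Dy zy p + zx p * Dx zy p - zy p * Dx zx p + 1 = 0)"

definition diff_connected ::
  "('w \<Rightarrow> real) set \<Rightarrow> (('w \<Rightarrow> real) \<Rightarrow> ('w \<Rightarrow> real)) \<Rightarrow> (('w \<Rightarrow> real) \<Rightarrow> ('w \<Rightarrow> real)) \<Rightarrow> bool" where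
  "diff_connected Fs Dx Dy \<longleftrightarrow>
     (\<forall>h\<in>Fs. Dx h = (\<lambda>_. 0) \<and> Dy h = (\<lambda>_. 0) \<longrightarrow> (\<exists>c. h = (\<lambda>_. c)))"

definition coeff_series :: "(nat \<Rightarrow> 'w \<Rightarrow> real) \<Rightarrow> 'w \<Rightarrow> real fls" where
  "coeff_series a p = fps_to_fls (Abs_fps (\<lambda>k. if k = 0 then 0 else a k p))"

text \<open>psi(lambda) = lambda + sum psi_k lambda^(-k), as a Laurent series in the
  formal variable mu = lambda^(-1) (so lambda = fls_X_inv).\<close>
definition psi_ser :: "(nat \<Rightarrow> 'w \<Rightarrow> real) \<Rightarrow> 'w \<Rightarrow> real fls" where
  "psi_ser psi p = fls_X_inv + coeff_series psi p"

text \<open>d psi / d lambda = - mu^2 d psi / d mu, as a series in mu.\<close>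
definition dlambda :: "real fls \<Rightarrow> real fls" where
  "dlambda F = - (fls_X ^ 2 * fls_deriv F)"

text \<open>phi(lambda) = 1/lambda + sum phi_k lambda^k, Laurent series in lambda.\<close>
definition phi_ser :: "(nat \<Rightarrow> 'w \<Rightarrow> real) \<Rightarrow> 'w \<Rightarrow> real fls" where
  "phi_ser phi p = fls_X_inv + coeff_series phi p"

text \<open>psi(phi(lambda)): substitute mu := 1/phi(lambda), a power series in lambda
  without constant term.\<close>
definition psi_comp_phi :: "(nat \<Rightarrow> 'w \<Rightarrow> real) \<Rightarrow> (nat \<Rightarrow> 'w \<Rightarrow> real) \<Rightarrow> 'w \<Rightarrow> real fls" where
  "psi_comp_phi psi phi p = fls_compose_fps (psi_ser psi p) (fls_regpart (inverse (phi_ser phi p)))"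

text \<open>Coefficientwise action of a total derivative: the leading coefficient 1
  is constant, so it is killed.\<close>
definition D_psi :: "(('w \<Rightarrow> real) \<Rightarrow> ('w \<Rightarrow> real)) \<Rightarrow> (nat \<Rightarrow> 'w \<Rightarrow> real) \<Rightarrow> 'w \<Rightarrow> real fls" where
  "D_psi D psi p = coeff_series (\<lambda>k. D (psi k)) p"

definition D_phi :: "(('w \<Rightarrow> real) \<Rightarrow> ('w \<Rightarrow> real)) \<Rightarrow> (nat \<Rightarrow> 'w \<Rightarrow> real) \<Rightarrow> 'w \<Rightarrow> real fls" where
  "D_phi D phi p = coeff_series (\<lambda>k. D (phi k)) p"

definition cond1 where
  "cond1 Dx Dy zx zy psi \<longleftrightarrow> (\<forall>p.
     (let lam = fls_X_inv; den = lam ^ 2 - fls_const (zx p) * lam - fls_const (zy p) in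
      D_psi Dx psi p = dlambda (psi_ser psi p) / den \<and>
      D_psi Dy psi p = (lam - fls_const (zx p)) * dlambda (psi_ser psi p) / den))"

definition cond2 where
  "cond2 Dx Dy zx zy phi \<longleftrightarrow> (\<forall>p.
     (let f = phi_ser phi p; den = f ^ 2 - fls_const (zx p) * f - fls_const (zy p) in
      D_phi Dx phi p = - (1 / den) \<and>
      D_phi Dy phi p = - ((f - fls_const (zx p)) / den)))"

definition cond3 where
  "cond3 psi phi \<longleftrightarrow> (\<exists>c :: real fls. \<forall>p. psi_comp_phi psi phi p = c)"

end

theory Submission
  imports Defs
begin

text \<open>
  For a total derivative D, differentiating psi(phi(lambda)) coefficientwise gives the chain rule
  D(psi o phi) = (D psi) o phi + psi'(phi) D phi.
  Substituting lambda := phi(lambda) into condition (1), which is injective, turns it into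
  (D psi) o phi = psi'(phi) r_D, where -r_D is the right-hand side of condition (2) for D.
  Since psi'(phi) has leading term 1, any two of (1), (2) and D_x(psi o phi) = D_y(psi o phi) = 0
  imply the third, and by differential connectedness the last statement is (3).
\<close>

lemma fps_inverse_nth_Suc:
  fixes f :: "'a::field fps"
  assumes "f $ 0 = 1"
  shows "inverse f $ Suc n = - (\<Sum>i=1..Suc n. f $ i * inverse f $ (Suc n - i))"
  using assms by (simp add: fps_inverse_def)

lemma fps_power_mult_nth_self:
  fixes g h :: "'a::comm_ring_1 fps"
  assumes "g $ 0 = 0" "h $ 0 = 0"
  shows "(g ^ n * h) $ n = 0"
  unfolding fps_mult_nth
proof (intro sum.neutral ballI)
  fix j assume "j \<in> {0..n}"
  then consider "j < n" | "j = n" by fastforce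
  then show "(g ^ n) $ j * h $ (n - j) = 0"
    by cases (simp_all add: startsby_zero_power_prefix[OF assms(1)] assms(2))
qed

lemma fps_compose_mult_nth:
  fixes b g h :: "'a::comm_ring_1 fps"
  assumes "g $ 0 = 0"
  shows "((b oo g) * h) $ n = (\<Sum>i=0..n. b $ i * (g ^ i * h) $ n)"
proof -
  have "((b oo g) * h) $ n = (\<Sum>j=0..n. (\<Sum>i=0..j. b $ i * (g ^ i) $ j) * h $ (n - j))"
    by (simp add: fps_mult_nth fps_compose_nth)
  also have "\<dots> = (\<Sum>j=0..n. \<Sum>i=0..n. b $ i * ((g ^ i) $ j * h $ (n - j)))"
  proof (intro sum.cong refl)
    fix j assume "j \<in> {0..n}"
    then have "(\<Sum>i=0..j. b $ i * (g ^ i) $ j) = (\<Sum>i=0..n. b $ i * (g ^ i) $ j)"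
      by (intro sum.mono_neutral_left) (auto simp: startsby_zero_power_prefix[OF assms])
    then show "(\<Sum>i=0..j. b $ i * (g ^ i) $ j) * h $ (n - j)
        = (\<Sum>i=0..n. b $ i * ((g ^ i) $ j * h $ (n - j)))"
      by (simp add: sum_distrib_right mult.assoc)
  qed
  also have "\<dots> = (\<Sum>i=0..n. b $ i * (g ^ i * h) $ n)"
    by (subst sum.swap) (simp add: fps_mult_nth sum_distrib_left)
  finally show ?thesis .
qed

lemma fps_compose_deriv_mult_nth:
  fixes f g h :: "'a::comm_ring_1 fps"
  assumes g0: "g $ 0 = 0" and h0: "h $ 0 = 0"
  shows "((fps_deriv f oo g) * h) $ n = (\<Sum>i=0..n. f $ i * (of_nat i * g ^ (i - 1) * h) $ n)"
proof (cases n)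
  case 0
  then show ?thesis using h0 by simp
next
  case (Suc m)
  have "((fps_deriv f oo g) * h) $ n = (\<Sum>i=0..n. fps_deriv f $ i * (g ^ i * h) $ n)"
    by (rule fps_compose_mult_nth[OF g0])
  also have "\<dots> = (\<Sum>i=0..m. fps_deriv f $ i * (g ^ i * h) $ n)"
    using fps_power_mult_nth_self[OF g0 h0, of n] by (simp add: Suc)
  also have "\<dots> = (\<Sum>i=0..n. f $ i * (of_nat i * g ^ (i - 1) * h) $ n)"
    unfolding Suc sum.atLeast0_atMost_Suc_shift
    by (simp add: fps_mult_left_const_nth mult.assoc mult.left_commute flip: fps_of_nat
        del: of_nat_Suc)
  finally show ?thesis .
qed

definition coeff_fps :: "(nat \<Rightarrow> 'w \<Rightarrow> real) \<Rightarrow> 'w \<Rightarrow> real fps" where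
  "coeff_fps a p = Abs_fps (\<lambda>k. if k = 0 then 0 else a k p)"

lemma coeff_series_eq: "coeff_series a p = fps_to_fls (coeff_fps a p)"
  by (simp add: coeff_series_def coeff_fps_def)

lemma psi_ser_eq: "psi_ser psi p = fls_X_inv + fps_to_fls (coeff_fps psi p)"
  by (simp add: psi_ser_def coeff_series_eq)

definition lambda_phi :: "(nat \<Rightarrow> 'w \<Rightarrow> real) \<Rightarrow> 'w \<Rightarrow> real fps" where
  "lambda_phi phi p = 1 + fps_X * coeff_fps phi p"

lemma phi_ser_eq: "phi_ser phi p = fls_X_inv * fps_to_fls (lambda_phi phi p)"
proof -
  have "fls_X_inv * fps_to_fls (lambda_phi phi p)
      = fls_X_inv + (fls_X_inv * fls_X) * fps_to_fls (coeff_fps phi p)"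
    by (simp add: lambda_phi_def fls_times_fps_to_fls fps_X_to_fls algebra_simps)
  then show ?thesis
    by (simp add: phi_ser_def coeff_series_eq flip: fls_inverse_X)
qed

lemma lambda_phi_nth_0 [simp]: "lambda_phi phi p $ 0 = 1"
  by (simp add: lambda_phi_def)

lemma lambda_phi_nonzero [simp]: "lambda_phi phi p \<noteq> 0"
  by (metis lambda_phi_nth_0 fps_zero_nth zero_neq_one)

lemma phi_ser_nonzero [simp]: "phi_ser phi p \<noteq> 0"
  by (simp add: phi_ser_eq)

definition recip_phi :: "(nat \<Rightarrow> 'w \<Rightarrow> real) \<Rightarrow> 'w \<Rightarrow> real fps" where
  "recip_phi phi p = fls_regpart (inverse (phi_ser phi p))"

lemma fps_to_fls_recip_phi: "fps_to_fls (recip_phi phi p) = inverse (phi_ser phi p)"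
  and recip_phi_eq: "recip_phi phi p = fps_X * inverse (lambda_phi phi p)"
proof -
  have "inverse (phi_ser phi p) = inverse fls_X_inv * inverse (fps_to_fls (lambda_phi phi p))"
    by (simp add: phi_ser_eq inverse_mult_distrib)
  also have "\<dots> = fps_to_fls (fps_X * inverse (lambda_phi phi p))"
    by (simp add: fls_inverse_X_inv fls_inverse_fps_to_fls subdegree_eq_0 fls_times_fps_to_fls
        fps_X_to_fls)
  finally have "inverse (phi_ser phi p) = fps_to_fls (fps_X * inverse (lambda_phi phi p))" .
  then show "recip_phi phi p = fps_X * inverse (lambda_phi phi p)"
    and "fps_to_fls (recip_phi phi p) = inverse (phi_ser phi p)"
    by (simp_all add: recip_phi_def)
qed

lemma recip_phi_nth_0 [simp]: "recip_phi phi p $ 0 = 0"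
  by (simp add: recip_phi_eq)

lemma recip_phi_nonzero [simp]: "recip_phi phi p \<noteq> 0"
proof
  assume "recip_phi phi p = 0"
  then have "recip_phi phi p $ 1 = 0" by simp
  then show False by (simp add: recip_phi_eq lambda_phi_def)
qed

lemma fls_compose_X_inv_recip_phi [simp]:
  "fls_compose_fps fls_X_inv (recip_phi phi p) = phi_ser phi p"
  by (simp add: fls_compose_fps_inverse fps_to_fls_recip_phi flip: fls_inverse_X)

lemma fls_compose_recip_phi_eq_iff:
  "fls_compose_fps F (recip_phi phi p) = fls_compose_fps G (recip_phi phi p) \<longleftrightarrow> F = G"
  by (metis fls_compose_fps_diff fls_compose_fps_eq_0_iff recip_phi_nonzero recip_phi_nth_0
      right_minus_eq)

definition dpsi_at_phi :: "(nat \<Rightarrow> 'w \<Rightarrow> real) \<Rightarrow> (nat \<Rightarrow> 'w \<Rightarrow> real) \<Rightarrow> 'w \<Rightarrow> real fls"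
  where
  "dpsi_at_phi psi phi p = fls_compose_fps (dlambda (psi_ser psi p)) (recip_phi phi p)"

lemma dpsi_at_phi_eq:
  "dpsi_at_phi psi phi p = 1 - fps_to_fls (recip_phi phi p) ^ 2
     * fps_to_fls (fps_deriv (coeff_fps psi p) oo recip_phi phi p)"
proof -
  let ?G = "fps_to_fls (recip_phi phi p)" and ?F = "phi_ser phi p"
  have "dpsi_at_phi psi phi p
      = - (?G ^ 2 * (- (?F ^ 2) + fps_to_fls (fps_deriv (coeff_fps psi p) oo recip_phi phi p)))"
    by (simp add: dpsi_at_phi_def dlambda_def psi_ser_eq fls_compose_fps_mult fls_compose_fps_add
        fls_compose_fps_diff fls_compose_fps_power fls_deriv_fps_to_fls)
  also have "\<dots> = (?G * ?F) ^ 2 - ?G ^ 2 * fps_to_fls (fps_deriv (coeff_fps psi p) oo recip_phi phi p)"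
    by (simp add: algebra_simps power2_eq_square)
  finally show ?thesis
    by (simp add: fps_to_fls_recip_phi)
qed

lemma dpsi_at_phi_nonzero: "dpsi_at_phi psi phi p \<noteq> 0"
proof -
  have "fls_nth (fls_deriv (psi_ser psi p)) (-2) \<noteq> 0"
    by (simp add: psi_ser_eq)
  then have "dlambda (psi_ser psi p) \<noteq> 0"
    unfolding dlambda_def by (metis fls_zero_nth mult_eq_0_iff neg_equal_0_iff_equal power_not_zero
        fls_X_nonzero)
  then show ?thesis
    by (simp add: dpsi_at_phi_def fls_compose_fps_eq_0_iff)
qed

definition psi_comp_phi_tail :: "(nat \<Rightarrow> 'w \<Rightarrow> real) \<Rightarrow> (nat \<Rightarrow> 'w \<Rightarrow> real) \<Rightarrow> 'w \<Rightarrow> real fps"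
  where
  "psi_comp_phi_tail psi phi p = coeff_fps phi p + (coeff_fps psi p oo recip_phi phi p)"

lemma psi_comp_phi_eq:
  "psi_comp_phi psi phi p = fls_X_inv + fps_to_fls (psi_comp_phi_tail psi phi p)"
proof -
  have "psi_comp_phi psi phi p
      = phi_ser phi p + fps_to_fls (coeff_fps psi p oo recip_phi phi p)"
    unfolding psi_comp_phi_def psi_ser_eq recip_phi_def[symmetric]
    by (simp add: fls_compose_fps_add)
  then show ?thesis
    by (simp add: psi_comp_phi_tail_def phi_ser_def coeff_series_eq)
qed

lemma cond3_iff_tail_constant: "cond3 psi phi \<longleftrightarrow> (\<exists>C. \<forall>p. psi_comp_phi_tail psi phi p = C)"
  unfolding cond3_def psi_comp_phi_eq
  by (metis add_diff_cancel_left' fls_regpart_fps_trivial)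

definition smooth_fps :: "('w \<Rightarrow> real) set \<Rightarrow> ('w \<Rightarrow> real fps) \<Rightarrow> bool" where
  "smooth_fps Fs F \<longleftrightarrow> (\<forall>n. (\<lambda>p. F p $ n) \<in> Fs)"

definition Dfps :: "(('w \<Rightarrow> real) \<Rightarrow> ('w \<Rightarrow> real)) \<Rightarrow> ('w \<Rightarrow> real fps) \<Rightarrow> 'w \<Rightarrow> real fps"
  where
  "Dfps D F p = Abs_fps (\<lambda>n. D (\<lambda>q. F q $ n) p)"

lemma Dfps_nth [simp]: "Dfps D F p $ n = D (\<lambda>q. F q $ n) p"
  by (simp add: Dfps_def)

locale algebra_derivation =
  fixes Fs :: "('w \<Rightarrow> real) set" and D :: "('w \<Rightarrow> real) \<Rightarrow> ('w \<Rightarrow> real)"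
  assumes const_in: "(\<lambda>_. c) \<in> Fs"
    and add_in: "f \<in> Fs \<Longrightarrow> g \<in> Fs \<Longrightarrow> (\<lambda>p. f p + g p) \<in> Fs"
    and mult_in: "f \<in> Fs \<Longrightarrow> g \<in> Fs \<Longrightarrow> (\<lambda>p. f p * g p) \<in> Fs"
    and derivation: "derivation_on Fs D"
begin

lemma D_const [simp]: "D (\<lambda>_. c) = (\<lambda>_. 0)"
  using derivation unfolding derivation_on_def by blast

lemma D_add: "f \<in> Fs \<Longrightarrow> g \<in> Fs \<Longrightarrow> D (\<lambda>p. f p + g p) p = D f p + D g p"
  using derivation unfolding derivation_on_def by metis

lemma D_mult: "f \<in> Fs \<Longrightarrow> g \<in> Fs \<Longrightarrow> D (\<lambda>p. f p * g p) p = D f p * g p + f p * D g p"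
  using derivation unfolding derivation_on_def by metis

lemma sum_in: "finite S \<Longrightarrow> (\<And>i. i \<in> S \<Longrightarrow> f i \<in> Fs) \<Longrightarrow> (\<lambda>p. \<Sum>i\<in>S. f i p) \<in> Fs"
  by (induction S rule: finite_induct) (auto intro: const_in add_in)

lemma D_sum:
  "finite S \<Longrightarrow> (\<And>i. i \<in> S \<Longrightarrow> f i \<in> Fs) \<Longrightarrow> D (\<lambda>p. \<Sum>i\<in>S. f i p) p = (\<Sum>i\<in>S. D (f i) p)"
proof (induction S rule: finite_induct)
  case (insert i S)
  then show ?case
    using D_add[of "f i" "\<lambda>p. \<Sum>i\<in>S. f i p"] by (simp add: sum_in)
qed simp

lemma smooth_fps_const: "smooth_fps Fs (\<lambda>_. c)"
  by (simp add: smooth_fps_def const_in)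

lemma Dfps_const [simp]: "Dfps D (\<lambda>_. c) p = 0"
  by (rule fps_ext) simp

lemma smooth_fps_add: "smooth_fps Fs F \<Longrightarrow> smooth_fps Fs G \<Longrightarrow> smooth_fps Fs (\<lambda>p. F p + G p)"
  by (simp add: smooth_fps_def add_in)

lemma Dfps_add:
  "smooth_fps Fs F \<Longrightarrow> smooth_fps Fs G \<Longrightarrow> Dfps D (\<lambda>p. F p + G p) p = Dfps D F p + Dfps D G p"
  unfolding smooth_fps_def by (intro fps_ext) (simp add: D_add)

lemma smooth_fps_mult: "smooth_fps Fs F \<Longrightarrow> smooth_fps Fs G \<Longrightarrow> smooth_fps Fs (\<lambda>p. F p * G p)"
  unfolding smooth_fps_def fps_mult_nth by (auto intro!: sum_in mult_in)

lemma Dfps_mult: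
  assumes "smooth_fps Fs F" "smooth_fps Fs G"
  shows "Dfps D (\<lambda>p. F p * G p) p = Dfps D F p * G p + F p * Dfps D G p"
proof (rule fps_ext)
  fix n
  have "Dfps D (\<lambda>p. F p * G p) p $ n = (\<Sum>i=0..n. D (\<lambda>p. F p $ i * G p $ (n - i)) p)"
    using assms unfolding smooth_fps_def by (simp add: fps_mult_nth D_sum mult_in)
  also have "\<dots> = (Dfps D F p * G p + F p * Dfps D G p) $ n"
    using assms unfolding smooth_fps_def by (simp add: D_mult fps_mult_nth sum.distrib)
  finally show "Dfps D (\<lambda>p. F p * G p) p $ n = (Dfps D F p * G p + F p * Dfps D G p) $ n" .
qed

lemma smooth_fps_power: "smooth_fps Fs F \<Longrightarrow> smooth_fps Fs (\<lambda>p. F p ^ k)"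
  by (induction k) (simp_all add: smooth_fps_const smooth_fps_mult)

lemma Dfps_power:
  assumes "smooth_fps Fs F"
  shows "Dfps D (\<lambda>p. F p ^ k) p = of_nat k * F p ^ (k - 1) * Dfps D F p"
proof (induction k)
  case (Suc k)
  have "Dfps D (\<lambda>p. F p ^ Suc k) p = Dfps D F p * F p ^ k + F p * Dfps D (\<lambda>p. F p ^ k) p"
    using Dfps_mult[OF assms smooth_fps_power[OF assms]] by simp
  then show ?case
    unfolding Suc by (cases k) (simp_all add: algebra_simps)
qed simp

lemma smooth_fps_inverse:
  assumes "smooth_fps Fs F" "\<And>p. F p $ 0 = 1"
  shows "smooth_fps Fs (\<lambda>p. inverse (F p))"
  unfolding smooth_fps_def
proof
  fix n show "(\<lambda>p. inverse (F p) $ n) \<in> Fs"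
  proof (induction n rule: less_induct)
    case (less n)
    show ?case
    proof (cases n)
      case 0
      then show ?thesis using assms(2) by (simp add: const_in)
    next
      case (Suc m)
      have "(\<lambda>p. (\<Sum>i=1..n. F p $ i * inverse (F p) $ (n - i))) \<in> Fs"
        using assms(1) less Suc unfolding smooth_fps_def by (intro sum_in mult_in) auto
      then have "(\<lambda>p. (-1) * (\<Sum>i=1..n. F p $ i * inverse (F p) $ (n - i))) \<in> Fs"
        by (intro mult_in const_in)
      then show ?thesis
        using Suc by (simp add: fps_inverse_nth_Suc assms(2))
    qed
  qed
qed

lemma Dfps_inverse:
  assumes "smooth_fps Fs F" "\<And>p. F p $ 0 = 1"
  shows "Dfps D (\<lambda>p. inverse (F p)) p = - (inverse (F p) ^ 2 * Dfps D F p)"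
proof -
  have inv: "\<And>p. F p * inverse (F p) = 1"
    using assms(2) by (simp add: inverse_mult_eq_1')
  have "0 = Dfps D (\<lambda>p. F p * inverse (F p)) p"
    unfolding inv by simp
  also have "\<dots> = Dfps D F p * inverse (F p) + F p * Dfps D (\<lambda>p. inverse (F p)) p"
    by (rule Dfps_mult[OF assms(1) smooth_fps_inverse[OF assms]])
  finally have "inverse (F p) * (Dfps D F p * inverse (F p) + F p * Dfps D (\<lambda>p. inverse (F p)) p) = 0"
    by simp
  then have "inverse (F p) ^ 2 * Dfps D F p + (F p * inverse (F p)) * Dfps D (\<lambda>p. inverse (F p)) p = 0"
    by (simp add: algebra_simps power2_eq_square)
  then show ?thesis
    unfolding inv by (simp add: eq_neg_iff_add_eq_0 add.commute)
qed

lemma smooth_fps_compose: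
  assumes "smooth_fps Fs F" "smooth_fps Fs G"
  shows "smooth_fps Fs (\<lambda>p. F p oo G p)"
  using assms smooth_fps_power[OF assms(2)]
  unfolding smooth_fps_def fps_compose_nth by (auto intro!: sum_in mult_in)

lemma Dfps_compose:
  assumes F: "smooth_fps Fs F" and G: "smooth_fps Fs G" and G0: "\<And>p. G p $ 0 = 0"
  shows "Dfps D (\<lambda>p. F p oo G p) p = (Dfps D F p oo G p) + (fps_deriv (F p) oo G p) * Dfps D G p"
proof (rule fps_ext)
  fix n
  have "Dfps D (\<lambda>p. F p oo G p) p $ n
      = (\<Sum>i=0..n. D (\<lambda>p. F p $ i) p * (G p ^ i) $ n + F p $ i * Dfps D (\<lambda>p. G p ^ i) p $ n)"
    using F smooth_fps_power[OF G] unfolding smooth_fps_def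
    by (simp add: fps_compose_nth D_sum D_mult mult_in)
  also have "\<dots> = (Dfps D F p oo G p) $ n
      + (\<Sum>i=0..n. F p $ i * (of_nat i * G p ^ (i - 1) * Dfps D G p) $ n)"
    by (simp add: sum.distrib fps_compose_nth Dfps_power[OF G])
  also have "(\<Sum>i=0..n. F p $ i * (of_nat i * G p ^ (i - 1) * Dfps D G p) $ n)
      = ((fps_deriv (F p) oo G p) * Dfps D G p) $ n"
    using G0 by (simp add: fps_compose_deriv_mult_nth)
  finally show "Dfps D (\<lambda>p. F p oo G p) p $ n
      = ((Dfps D F p oo G p) + (fps_deriv (F p) oo G p) * Dfps D G p) $ n"
    by simp
qed

lemma smooth_coeff_fps:
  assumes "\<forall>k\<ge>1. a k \<in> Fs"
  shows "smooth_fps Fs (coeff_fps a)"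
  unfolding smooth_fps_def
proof
  fix n show "(\<lambda>p. coeff_fps a p $ n) \<in> Fs"
    using assms by (cases n) (simp_all add: coeff_fps_def const_in)
qed

lemma Dfps_coeff_fps: "Dfps D (coeff_fps a) p = coeff_fps (\<lambda>k. D (a k)) p"
  by (rule fps_ext) (simp add: coeff_fps_def)

lemma smooth_lambda_phi: "\<forall>k\<ge>1. phi k \<in> Fs \<Longrightarrow> smooth_fps Fs (lambda_phi phi)"
  unfolding lambda_phi_def
  by (intro smooth_fps_add smooth_fps_mult smooth_fps_const smooth_coeff_fps)

lemma Dfps_lambda_phi:
  "\<forall>k\<ge>1. phi k \<in> Fs \<Longrightarrow> Dfps D (lambda_phi phi) p = fps_X * coeff_fps (\<lambda>k. D (phi k)) p"
  unfolding lambda_phi_def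
  by (simp add: Dfps_add Dfps_mult Dfps_coeff_fps smooth_fps_const smooth_fps_mult smooth_coeff_fps)

lemma smooth_recip_phi: "\<forall>k\<ge>1. phi k \<in> Fs \<Longrightarrow> smooth_fps Fs (recip_phi phi)"
  unfolding recip_phi_eq
  by (intro smooth_fps_mult smooth_fps_const smooth_fps_inverse smooth_lambda_phi) simp_all

lemma Dfps_recip_phi:
  assumes "\<forall>k\<ge>1. phi k \<in> Fs"
  shows "Dfps D (recip_phi phi) p = - (recip_phi phi p ^ 2 * coeff_fps (\<lambda>k. D (phi k)) p)"
proof -
  have inv: "smooth_fps Fs (\<lambda>p. inverse (lambda_phi phi p))"
    using assms by (intro smooth_fps_inverse smooth_lambda_phi) simp_all
  have "Dfps D (recip_phi phi) p = fps_X * Dfps D (\<lambda>p. inverse (lambda_phi phi p)) p"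
    unfolding recip_phi_eq by (simp add: Dfps_mult[OF smooth_fps_const inv])
  also have "\<dots> = - ((fps_X * inverse (lambda_phi phi p)) ^ 2 * coeff_fps (\<lambda>k. D (phi k)) p)"
    using assms by (simp add: Dfps_inverse smooth_lambda_phi Dfps_lambda_phi algebra_simps
        power2_eq_square)
  finally show ?thesis
    by (simp add: recip_phi_eq)
qed

lemma smooth_psi_comp_phi_tail:
  "\<forall>k\<ge>1. psi k \<in> Fs \<Longrightarrow> \<forall>k\<ge>1. phi k \<in> Fs \<Longrightarrow> smooth_fps Fs (psi_comp_phi_tail psi phi)"
  unfolding psi_comp_phi_tail_def
  by (intro smooth_fps_add smooth_fps_compose smooth_coeff_fps smooth_recip_phi)

lemma Dfps_psi_comp_phi_tail:
  assumes psi: "\<forall>k\<ge>1. psi k \<in> Fs" and phi: "\<forall>k\<ge>1. phi k \<in> Fs"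
  shows "fps_to_fls (Dfps D (psi_comp_phi_tail psi phi) p)
    = fls_compose_fps (D_psi D psi p) (recip_phi phi p) + dpsi_at_phi psi phi p * D_phi D phi p"
proof -
  let ?g = "recip_phi phi p" and ?Dphi = "coeff_fps (\<lambda>k. D (phi k)) p"
  have "Dfps D (psi_comp_phi_tail psi phi) p
      = ?Dphi + (coeff_fps (\<lambda>k. D (psi k)) p oo ?g)
        - (fps_deriv (coeff_fps psi p) oo ?g) * ?g ^ 2 * ?Dphi"
    unfolding psi_comp_phi_tail_def
    using psi phi
    by (simp add: Dfps_add Dfps_compose Dfps_coeff_fps Dfps_recip_phi smooth_coeff_fps
        smooth_recip_phi smooth_fps_compose)
  also have "fps_to_fls \<dots>
      = fls_compose_fps (D_psi D psi p) (recip_phi phi p) + dpsi_at_phi psi phi p * D_phi D phi p"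
    by (simp add: D_psi_def D_phi_def coeff_series_eq dpsi_at_phi_eq fls_times_fps_to_fls
        fps_to_fls_power algebra_simps)
  finally show ?thesis .
qed

end

lemma GT_covering_derivations:
  assumes "GT_covering Fs Dx Dy x y z zx zy"
  shows "algebra_derivation Fs Dx" "algebra_derivation Fs Dy"
  using assms unfolding GT_covering_def algebra_derivation_def by blast+

lemma smooth_fps_constant_iff:
  assumes "algebra_derivation Fs Dx" "algebra_derivation Fs Dy" "diff_connected Fs Dx Dy"
    and "smooth_fps Fs F"
  shows "(\<exists>C. \<forall>p. F p = C) \<longleftrightarrow> (\<forall>p. Dfps Dx F p = 0 \<and> Dfps Dy F p = 0)"
proof
  assume "\<exists>C. \<forall>p. F p = C"
  then obtain C where "F = (\<lambda>_. C)" by blast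
  then show "\<forall>p. Dfps Dx F p = 0 \<and> Dfps Dy F p = 0"
    using algebra_derivation.Dfps_const[OF assms(1)] algebra_derivation.Dfps_const[OF assms(2)]
    by simp
next
  assume D0: "\<forall>p. Dfps Dx F p = 0 \<and> Dfps Dy F p = 0"
  have "F p $ n = F q $ n" for p q n
  proof -
    have "Dx (\<lambda>p. F p $ n) r = 0 \<and> Dy (\<lambda>p. F p $ n) r = 0" for r
      using D0 by (metis Dfps_nth fps_zero_nth)
    then have "Dx (\<lambda>p. F p $ n) = (\<lambda>_. 0)" "Dy (\<lambda>p. F p $ n) = (\<lambda>_. 0)"
      by auto
    then obtain c where "(\<lambda>p. F p $ n) = (\<lambda>_. c)"
      using assms(3,4) unfolding diff_connected_def smooth_fps_def by blast
    then show ?thesis by metis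
  qed
  then show "\<exists>C. \<forall>p. F p = C"
    by (metis fps_ext)
qed

definition phi_den :: "('w \<Rightarrow> real) \<Rightarrow> ('w \<Rightarrow> real) \<Rightarrow> (nat \<Rightarrow> 'w \<Rightarrow> real) \<Rightarrow> 'w \<Rightarrow> real fls"
  where
  "phi_den zx zy phi p = phi_ser phi p ^ 2 - fls_const (zx p) * phi_ser phi p - fls_const (zy p)"

lemma cond2_iff:
  "cond2 Dx Dy zx zy phi \<longleftrightarrow> (\<forall>p.
     D_phi Dx phi p = - (1 / phi_den zx zy phi p) \<and>
     D_phi Dy phi p = - ((phi_ser phi p - fls_const (zx p)) / phi_den zx zy phi p))"
  by (simp add: cond2_def phi_den_def Let_def)

lemma cond1_iff_at_phi:
  "cond1 Dx Dy zx zy psi \<longleftrightarrow> (\<forall>p.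
     fls_compose_fps (D_psi Dx psi p) (recip_phi phi p)
       = dpsi_at_phi psi phi p / phi_den zx zy phi p \<and>
     fls_compose_fps (D_psi Dy psi p) (recip_phi phi p)
       = (phi_ser phi p - fls_const (zx p)) * dpsi_at_phi psi phi p / phi_den zx zy phi p)"
proof -
  have den: "fls_compose_fps (fls_X_inv ^ 2 - fls_const (zx p) * fls_X_inv - fls_const (zy p))
      (recip_phi phi p) = phi_den zx zy phi p" for p
    by (simp add: fls_compose_fps_diff fls_compose_fps_mult fls_compose_fps_power phi_den_def)
  have lin: "fls_compose_fps (fls_X_inv - fls_const (zx p)) (recip_phi phi p)
      = phi_ser phi p - fls_const (zx p)" for p
    by (simp add: fls_compose_fps_diff)
  show ?thesis
    unfolding cond1_def Let_def dpsi_at_phi_def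
    by (simp flip: den lin fls_compose_fps_divide fls_compose_fps_mult
        add: fls_compose_recip_phi_eq_iff)
qed

lemma cond3_iff_total_derivatives_vanish:
  assumes "GT_covering Fs Dx Dy x y z zx zy" "diff_connected Fs Dx Dy"
    and psi: "\<forall>k\<ge>1. psi k \<in> Fs" and phi: "\<forall>k\<ge>1. phi k \<in> Fs"
  shows "cond3 psi phi \<longleftrightarrow> (\<forall>p.
     fls_compose_fps (D_psi Dx psi p) (recip_phi phi p) + dpsi_at_phi psi phi p * D_phi Dx phi p = 0 \<and>
     fls_compose_fps (D_psi Dy psi p) (recip_phi phi p) + dpsi_at_phi psi phi p * D_phi Dy phi p = 0)"
proof -
  interpret Dx: algebra_derivation Fs Dx by (rule GT_covering_derivations(1)[OF assms(1)])
  interpret Dy: algebra_derivation Fs Dy by (rule GT_covering_derivations(2)[OF assms(1)])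
  show ?thesis
    unfolding cond3_iff_tail_constant
    using smooth_fps_constant_iff[OF Dx.algebra_derivation_axioms Dy.algebra_derivation_axioms
        assms(2) Dx.smooth_psi_comp_phi_tail[OF psi phi]]
    by (simp flip: Dx.Dfps_psi_comp_phi_tail[OF psi phi] Dy.Dfps_psi_comp_phi_tail[OF psi phi])
qed

lemma pointwise_two_of_three:
  fixes a b c d e r s :: "'p \<Rightarrow> 'a::field"
  assumes "\<And>p. e p \<noteq> 0"
  shows "((\<forall>p. a p = e p * r p \<and> b p = e p * s p) \<and> (\<forall>p. c p = - r p \<and> d p = - s p)
          \<longrightarrow> (\<forall>p. a p + e p * c p = 0 \<and> b p + e p * d p = 0))
       \<and> ((\<forall>p. a p = e p * r p \<and> b p = e p * s p) \<and> (\<forall>p. a p + e p * c p = 0 \<and> b p + e p * d p = 0)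
          \<longrightarrow> (\<forall>p. c p = - r p \<and> d p = - s p))
       \<and> ((\<forall>p. c p = - r p \<and> d p = - s p) \<and> (\<forall>p. a p + e p * c p = 0 \<and> b p + e p * d p = 0)
          \<longrightarrow> (\<forall>p. a p = e p * r p \<and> b p = e p * s p))"
proof -
  have "a p + e p * c p = (a p - e p * r p) + e p * (c p + r p)"
    and "b p + e p * d p = (b p - e p * s p) + e p * (d p + s p)" for p
    by (simp_all add: algebra_simps)
  then show ?thesis
    using assms by (auto simp: eq_neg_iff_add_eq_0)
qed

theorem mainTheorem10:
  fixes Fs :: "('w \<Rightarrow> real) set"
    and Dx Dy :: "('w \<Rightarrow> real) \<Rightarrow> ('w \<Rightarrow> real)"
    and x y z zx zy :: "'w \<Rightarrow> real"
    and psi phi :: "nat \<Rightarrow> 'w \<Rightarrow> real"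
  assumes "GT_covering Fs Dx Dy x y z zx zy"
    and "diff_connected Fs Dx Dy"
    and "\<forall>k\<ge>1. psi k \<in> Fs" and "\<forall>k\<ge>1. phi k \<in> Fs"
  shows "(cond1 Dx Dy zx zy psi \<and> cond2 Dx Dy zx zy phi \<longrightarrow> cond3 psi phi)
       \<and> (cond1 Dx Dy zx zy psi \<and> cond3 psi phi \<longrightarrow> cond2 Dx Dy zx zy phi)
       \<and> (cond2 Dx Dy zx zy phi \<and> cond3 psi phi \<longrightarrow> cond1 Dx Dy zx zy psi)"
proof -
  have quotients: "\<And>p. dpsi_at_phi psi phi p / phi_den zx zy phi p
      = dpsi_at_phi psi phi p * (1 / phi_den zx zy phi p)"
    "\<And>p. (phi_ser phi p - fls_const (zx p)) * dpsi_at_phi psi phi p / phi_den zx zy phi p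
      = dpsi_at_phi psi phi p * ((phi_ser phi p - fls_const (zx p)) / phi_den zx zy phi p)"
    by simp_all
  show ?thesis
    unfolding cond1_iff_at_phi[where phi = phi] cond2_iff cond3_iff_total_derivatives_vanish[OF assms] quotients
    by (rule pointwise_two_of_three) (rule dpsi_at_phi_nonzero)
qed

end
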